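(* Let $\rho_{AB}\in\mathcal{S}_\le(\mathcal{H}_{AB})$ and let $\{P^i_A\}_{i\in I}$ be a collection of projectors forming a projective measurement on $\mathcal{H}_A$. For each $i$ with $p_i:=\mathrm{tr}[P^i_A\rho_{AB}]\ne0$ let $\rho^i_{AB}=\frac1{p_i}P^i_A\rho_{AB}P^i_A$. Then $$I_{\max}(A:B)_\rho\ge\max_i I_{\max}(A:B)_{\rho^i},$$ the maximum ranging over all $i$ with $p_i\neq0$.
   Context: Finite-dimensional Hilbert spaces; logarithms base 2. $\mathcal{S}_\le(\mathcal{H})$: positive semidefinite operators of trace $\le1$; $\mathcal{S}_=(\mathcal{H})$: trace 1. $D_{\max}(\rho\|\sigma)=\inf\{\lambda\in\mathbb{R}:2^\lambda\sigma\ge\rho\}$. $I_{\max}(A:B)_\rho=\inf_{\sigma_B\in\mathcal{S}_=(\mathcal{H}_B)}D_{\max}(\rho_{AB}\|\rho_A\otimes\sigma_B)$. *)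

theory Defs
  imports "HOL-Library.Extended_Real" "Jordan_Normal_Form.Schur_Decomposition"
begin

text \<open>Positive semidefinite n x n complex matrix: the quadratic form v* A v is real and nonnegative
  for every vector v (over complex scalars this also forces A to be Hermitian).\<close>
definition psd :: "nat \<Rightarrow> complex mat \<Rightarrow> bool" where
  "psd n A \<longleftrightarrow> A \<in> carrier_mat n n \<and>
     (\<forall>v \<in> carrier_vec n. conjugate v \<bullet> (A *\<^sub>v v) \<in> \<real> \<and> 0 \<le> Re (conjugate v \<bullet> (A *\<^sub>v v)))"

definition loewner_le :: "nat \<Rightarrow> complex mat \<Rightarrow> complex mat \<Rightarrow> bool" where
  "loewner_le n A B \<longleftrightarrow> A \<in> carrier_mat n n \<and> B \<in> carrier_mat n n \<and> psd n (B - A)"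

definition mtrace :: "complex mat \<Rightarrow> complex" where
  "mtrace A = (\<Sum>i<dim_row A. A $$ (i, i))"

definition subnormalized_state :: "nat \<Rightarrow> complex mat \<Rightarrow> bool" where
  "subnormalized_state n \<rho> \<longleftrightarrow> psd n \<rho> \<and> Re (mtrace \<rho>) \<le> 1"

definition normalized_state :: "nat \<Rightarrow> complex mat \<Rightarrow> bool" where
  "normalized_state n \<rho> \<longleftrightarrow> psd n \<rho> \<and> mtrace \<rho> = 1"

text \<open>Kronecker (tensor) product; H_AB = H_A \<otimes> H_B with index (a,b) \<mapsto> a * dB + b.\<close>
definition kron :: "complex mat \<Rightarrow> complex mat \<Rightarrow> complex mat" where
  "kron A B = mat (dim_row A * dim_row B) (dim_col A * dim_col B)
     (\<lambda>(i, j). A $$ (i div dim_row B, j div dim_col B) * B $$ (i mod dim_row B, j mod dim_col B))"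

definition ptrace_B :: "nat \<Rightarrow> nat \<Rightarrow> complex mat \<Rightarrow> complex mat" where
  "ptrace_B dA dB R = mat dA dA (\<lambda>(i, j). \<Sum>k<dB. R $$ (i * dB + k, j * dB + k))"

text \<open>D_max(rho||sigma) = inf {lambda. 2^lambda sigma \<ge> rho}, valued in extended reals
  (inf of the empty set is +infinity).\<close>
definition Dmax :: "nat \<Rightarrow> complex mat \<Rightarrow> complex mat \<Rightarrow> ereal" where
  "Dmax n \<rho> \<sigma> = Inf {ereal l | l. loewner_le n \<rho> (complex_of_real (2 powr l) \<cdot>\<^sub>m \<sigma>)}"

definition Imax :: "nat \<Rightarrow> nat \<Rightarrow> complex mat \<Rightarrow> ereal" where
  "Imax dA dB \<rho> = Inf {Dmax (dA * dB) \<rho> (kron (ptrace_B dA dB \<rho>) \<sigma>) | \<sigma>. normalized_state dB \<sigma>}"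

definition projector :: "nat \<Rightarrow> complex mat \<Rightarrow> bool" where
  "projector n P \<longleftrightarrow> P \<in> carrier_mat n n \<and> P * P = P \<and> mat_adjoint P = P"

definition projective_measurement :: "nat \<Rightarrow> 'i set \<Rightarrow> ('i \<Rightarrow> complex mat) \<Rightarrow> bool" where
  "projective_measurement n I P \<longleftrightarrow> finite I \<and> (\<forall>i\<in>I. projector n (P i)) \<and>
     (\<forall>a<n. \<forall>b<n. (\<Sum>i\<in>I. P i $$ (a, b)) = (if a = b then 1 else 0))"

end

theory Submission
  imports Defs
begin

text \<open>
  Fix a state \<sigma> on B and a real l with \<rho> \<le> 2^l (\<rho>_A \<otimes> \<sigma>) in the Loewner order.  For a
  projector P on A put \<Pi> = P \<otimes> 1.  Conjugation by the self-adjoint \<Pi> preserves positivity, and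
  by the mixed-product rule \<Pi> (\<rho>_A \<otimes> \<sigma>) \<Pi> = (P \<rho>_A P) \<otimes> \<sigma>, while the partial trace commutes with
  local operators: tr_B (\<Pi> \<rho> \<Pi>) = P \<rho>_A P.  This survives scaling by any nonnegative factor,
  in particular by 1/p with p = tr (\<Pi> \<rho>) \<ge> 0, which gives
  \<rho>^i \<le> 2^l (\<rho>^i_A \<otimes> \<sigma>).  So every l feasible for \<rho> is feasible for \<rho>^i, i.e.
  D_max(\<rho>^i \<parallel> \<rho>^i_A \<otimes> \<sigma>) \<le> D_max(\<rho> \<parallel> \<rho>_A \<otimes> \<sigma>) for every \<sigma>, and the theorem follows by taking
  the infimum over \<sigma> and the supremum over the outcomes i.
\<close>

lemma sum_lessThan_mult:
  fixes f :: "nat \<Rightarrow> 'a::comm_monoid_add"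
  shows "(\<Sum>k<a * b. f k) = (\<Sum>x<a. \<Sum>y<b. f (x * b + y))"
proof (induction a)
  case 0
  then show ?case by simp
next
  case (Suc a)
  have split: "{..<Suc a * b} = {..<a * b} \<union> {a * b..<a * b + b}" by auto
  have "(\<Sum>k<Suc a * b. f k) = (\<Sum>k<a * b. f k) + (\<Sum>k\<in>{a * b..<a * b + b}. f k)"
    unfolding split by (rule sum.union_disjoint) auto
  also have "(\<Sum>k\<in>{a * b..<a * b + b}. f k) = (\<Sum>y<b. f (a * b + y))"
    using sum.shift_bounds_nat_ivl[of f 0 "a * b" b] by (simp add: lessThan_atLeast0 add.commute)
  finally show ?case using Suc by simp
qed

lemma pair_index_less:
  assumes "x < (m::nat)" and "y < n"
  shows "x * n + y < m * n"
proof -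
  have "x * n + y < Suc x * n" using assms(2) by simp
  also have "\<dots> \<le> m * n" using assms(1) by (intro mult_le_mono1) simp
  finally show ?thesis .
qed

lemma pair_index_div_mod:
  assumes "i < (m::nat) * n"
  shows "i div n < m" and "i mod n < n"
  using assms by (simp_all add: less_mult_imp_div_less) (cases n, auto)

subsection \<open>Kronecker products and the partial trace\<close>

lemma kron_carrier: "kron A B \<in> carrier_mat (dim_row A * dim_row B) (dim_col A * dim_col B)"
  unfolding kron_def by simp

lemma kron_index:
  assumes "A \<in> carrier_mat na ma" and "B \<in> carrier_mat nb mb"
    and "i < na * nb" and "j < ma * mb"
  shows "kron A B $$ (i, j) = A $$ (i div nb, j div mb) * B $$ (i mod nb, j mod mb)"
  using assms unfolding kron_def by simp

lemma kron_mult: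
  fixes A B C D :: "complex mat"
  assumes A: "A \<in> carrier_mat na ka" and B: "B \<in> carrier_mat nb kb"
    and C: "C \<in> carrier_mat ka ma" and D: "D \<in> carrier_mat kb mb"
  shows "kron A B * kron C D = kron (A * C) (B * D)"
proof (rule eq_matI)
  have K1: "kron A B \<in> carrier_mat (na * nb) (ka * kb)" and K2: "kron C D \<in> carrier_mat (ka * kb) (ma * mb)"
    using kron_carrier[of A B] kron_carrier[of C D] A B C D by auto
  fix i j assume "i < dim_row (kron (A * C) (B * D))" and "j < dim_col (kron (A * C) (B * D))"
  then have i: "i < na * nb" and j: "j < ma * mb" using A B C D by (auto simp: kron_def)
  note ij = pair_index_div_mod[OF i] pair_index_div_mod[OF j]
  have "(kron A B * kron C D) $$ (i, j) = (\<Sum>k<ka * kb. kron A B $$ (i, k) * kron C D $$ (k, j))"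
    using i j K1 K2 by (auto simp: scalar_prod_def lessThan_atLeast0 intro!: sum.cong)
  also have "\<dots> = (\<Sum>x<ka. \<Sum>y<kb. kron A B $$ (i, x * kb + y) * kron C D $$ (x * kb + y, j))"
    by (rule sum_lessThan_mult)
  also have "\<dots> = (\<Sum>x<ka. \<Sum>y<kb. (A $$ (i div nb, x) * C $$ (x, j div mb)) *
                                    (B $$ (i mod nb, y) * D $$ (y, j mod mb)))"
    using i j pair_index_less
    by (intro sum.cong refl) (simp add: kron_index[OF A B] kron_index[OF C D] algebra_simps)
  also have "\<dots> = (\<Sum>x<ka. A $$ (i div nb, x) * C $$ (x, j div mb)) *
                  (\<Sum>y<kb. B $$ (i mod nb, y) * D $$ (y, j mod mb))"
    by (simp add: sum_product)
  also have "\<dots> = (A * C) $$ (i div nb, j div mb) * (B * D) $$ (i mod nb, j mod mb)"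
    using A B C D ij by (auto simp: scalar_prod_def lessThan_atLeast0 intro!: arg_cong2[where f = "(*)"] sum.cong)
  also have "\<dots> = kron (A * C) (B * D) $$ (i, j)"
    using A B C D i j by (simp add: kron_index[of "A * C" na ma "B * D" nb mb])
  finally show "(kron A B * kron C D) $$ (i, j) = kron (A * C) (B * D) $$ (i, j)" .
qed (use A B C D in \<open>auto simp: kron_def\<close>)

lemma kron_smult_left: "kron (c \<cdot>\<^sub>m A) B = c \<cdot>\<^sub>m kron A B"
  by (rule eq_matI) (auto simp: kron_def less_mult_imp_div_less)

lemma ptrace_B_carrier [simp]: "ptrace_B dA dB R \<in> carrier_mat dA dA"
  and ptrace_B_dim [simp]: "dim_row (ptrace_B dA dB R) = dA" "dim_col (ptrace_B dA dB R) = dA"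
  unfolding ptrace_B_def by simp_all

lemma ptrace_B_index:
  "x < dA \<Longrightarrow> y < dA \<Longrightarrow> ptrace_B dA dB R $$ (x, y) = (\<Sum>k<dB. R $$ (x * dB + k, y * dB + k))"
  unfolding ptrace_B_def by simp

lemma ptrace_B_smult:
  assumes "R \<in> carrier_mat (dA * dB) (dA * dB)"
  shows "ptrace_B dA dB (c \<cdot>\<^sub>m R) = c \<cdot>\<^sub>m ptrace_B dA dB R"
  using assms pair_index_less
  by (intro eq_matI) (auto simp: ptrace_B_index sum_distrib_left)

lemma kron_id_mult_index:
  fixes P X :: "complex mat"
  assumes P: "P \<in> carrier_mat dA dA" and X: "X \<in> carrier_mat (dA * dB) m"
    and i: "i < dA * dB" and j: "j < m"
  shows "(kron P (1\<^sub>m dB) * X) $$ (i, j) = (\<Sum>a<dA. P $$ (i div dB, a) * X $$ (a * dB + i mod dB, j))"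
proof -
  have K: "kron P (1\<^sub>m dB) \<in> carrier_mat (dA * dB) (dA * dB)" using kron_carrier[of P "1\<^sub>m dB"] P by simp
  have "(kron P (1\<^sub>m dB) * X) $$ (i, j) = (\<Sum>k<dA * dB. kron P (1\<^sub>m dB) $$ (i, k) * X $$ (k, j))"
    using i j X K by (auto simp: scalar_prod_def lessThan_atLeast0 intro!: sum.cong)
  also have "\<dots> = (\<Sum>a<dA. \<Sum>b<dB. kron P (1\<^sub>m dB) $$ (i, a * dB + b) * X $$ (a * dB + b, j))"
    by (rule sum_lessThan_mult)
  also have "\<dots> = (\<Sum>a<dA. \<Sum>b<dB. if i mod dB = b then P $$ (i div dB, a) * X $$ (a * dB + b, j) else 0)"
    using i pair_index_div_mod[OF i] pair_index_less
    by (intro sum.cong refl) (simp add: kron_index[OF P one_carrier_mat])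
  also have "\<dots> = (\<Sum>a<dA. P $$ (i div dB, a) * X $$ (a * dB + i mod dB, j))"
    using pair_index_div_mod[OF i] by (simp add: sum.delta)
  finally show ?thesis .
qed

lemma mult_kron_id_index:
  fixes P Y :: "complex mat"
  assumes P: "P \<in> carrier_mat dA dA" and Y: "Y \<in> carrier_mat m (dA * dB)"
    and i: "i < m" and j: "j < dA * dB"
  shows "(Y * kron P (1\<^sub>m dB)) $$ (i, j) = (\<Sum>a<dA. Y $$ (i, a * dB + j mod dB) * P $$ (a, j div dB))"
proof -
  have K: "kron P (1\<^sub>m dB) \<in> carrier_mat (dA * dB) (dA * dB)" using kron_carrier[of P "1\<^sub>m dB"] P by simp
  have "(Y * kron P (1\<^sub>m dB)) $$ (i, j) = (\<Sum>k<dA * dB. Y $$ (i, k) * kron P (1\<^sub>m dB) $$ (k, j))"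
    using i j Y K by (auto simp: scalar_prod_def lessThan_atLeast0 intro!: sum.cong)
  also have "\<dots> = (\<Sum>a<dA. \<Sum>b<dB. Y $$ (i, a * dB + b) * kron P (1\<^sub>m dB) $$ (a * dB + b, j))"
    by (rule sum_lessThan_mult)
  also have "\<dots> = (\<Sum>a<dA. \<Sum>b<dB. if b = j mod dB then Y $$ (i, a * dB + b) * P $$ (a, j div dB) else 0)"
    using j pair_index_div_mod[OF j] pair_index_less
    by (intro sum.cong refl) (simp add: kron_index[OF P one_carrier_mat])
  also have "\<dots> = (\<Sum>a<dA. Y $$ (i, a * dB + j mod dB) * P $$ (a, j div dB))"
    using pair_index_div_mod[OF j] by (simp add: sum.delta')
  finally show ?thesis .
qed

lemma ptrace_B_kron_id_mult:
  fixes P X :: "complex mat"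
  assumes P: "P \<in> carrier_mat dA dA" and X: "X \<in> carrier_mat (dA * dB) (dA * dB)"
  shows "ptrace_B dA dB (kron P (1\<^sub>m dB) * X) = P * ptrace_B dA dB X"
proof (rule eq_matI)
  fix x y assume "x < dim_row (P * ptrace_B dA dB X)" and "y < dim_col (P * ptrace_B dA dB X)"
  then have x: "x < dA" and y: "y < dA" using P by auto
  have "ptrace_B dA dB (kron P (1\<^sub>m dB) * X) $$ (x, y)
      = (\<Sum>k<dB. \<Sum>a<dA. P $$ (x, a) * X $$ (a * dB + k, y * dB + k))"
    using x y X pair_index_less by (simp add: ptrace_B_index kron_id_mult_index[OF P X])
  also have "\<dots> = (\<Sum>a<dA. P $$ (x, a) * ptrace_B dA dB X $$ (a, y))"
    using y by (subst sum.swap) (simp add: ptrace_B_index sum_distrib_left)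
  also have "\<dots> = (P * ptrace_B dA dB X) $$ (x, y)"
    using P x y by (auto simp: scalar_prod_def lessThan_atLeast0 intro!: sum.cong)
  finally show "ptrace_B dA dB (kron P (1\<^sub>m dB) * X) $$ (x, y) = (P * ptrace_B dA dB X) $$ (x, y)" .
qed (use P in auto)

lemma ptrace_B_mult_kron_id:
  fixes P X :: "complex mat"
  assumes P: "P \<in> carrier_mat dA dA" and X: "X \<in> carrier_mat (dA * dB) (dA * dB)"
  shows "ptrace_B dA dB (X * kron P (1\<^sub>m dB)) = ptrace_B dA dB X * P"
proof (rule eq_matI)
  fix x y assume "x < dim_row (ptrace_B dA dB X * P)" and "y < dim_col (ptrace_B dA dB X * P)"
  then have x: "x < dA" and y: "y < dA" using P by auto
  have "ptrace_B dA dB (X * kron P (1\<^sub>m dB)) $$ (x, y)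
      = (\<Sum>k<dB. \<Sum>a<dA. X $$ (x * dB + k, a * dB + k) * P $$ (a, y))"
    using x y X pair_index_less by (simp add: ptrace_B_index mult_kron_id_index[OF P X])
  also have "\<dots> = (\<Sum>a<dA. ptrace_B dA dB X $$ (x, a) * P $$ (a, y))"
    using x by (subst sum.swap) (simp add: ptrace_B_index sum_distrib_right)
  also have "\<dots> = (ptrace_B dA dB X * P) $$ (x, y)"
    using P x y by (auto simp: scalar_prod_def lessThan_atLeast0 intro!: sum.cong)
  finally show "ptrace_B dA dB (X * kron P (1\<^sub>m dB)) $$ (x, y) = (ptrace_B dA dB X * P) $$ (x, y)" .
qed (use P in auto)

lemma ptrace_B_local_sandwich:
  fixes P X :: "complex mat"
  assumes P: "P \<in> carrier_mat dA dA" and X: "X \<in> carrier_mat (dA * dB) (dA * dB)"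
  shows "ptrace_B dA dB (kron P (1\<^sub>m dB) * X * kron P (1\<^sub>m dB)) = P * ptrace_B dA dB X * P"
proof -
  have "kron P (1\<^sub>m dB) * X \<in> carrier_mat (dA * dB) (dA * dB)"
    using kron_carrier[of P "1\<^sub>m dB"] P X by simp
  then show ?thesis
    by (simp add: ptrace_B_mult_kron_id[OF P] ptrace_B_kron_id_mult[OF P X])
qed

subsection \<open>Adjoints, projectors and positivity\<close>

lemma mat_adjoint_dim [simp]:
  "dim_row (mat_adjoint A) = dim_col A" "dim_col (mat_adjoint A) = dim_row A"
  unfolding mat_adjoint_def by simp_all

lemma mat_adjoint_index:
  "i < dim_col A \<Longrightarrow> j < dim_row A \<Longrightarrow> mat_adjoint A $$ (i, j) = cnj (A $$ (j, i))"
  unfolding mat_adjoint_def by (simp add: mat_of_rows_index)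

lemma self_adjoint_index:
  assumes "mat_adjoint B = B" and "B \<in> carrier_mat n n" and "i < n" and "k < n"
  shows "B $$ (k, i) = cnj (B $$ (i, k))"
  using mat_adjoint_index[of k B i] assms by simp

lemma projector_kron_id:
  assumes P: "projector dA P"
  shows "projector (dA * dB) (kron P (1\<^sub>m dB))"
proof -
  have Pc: "P \<in> carrier_mat dA dA" and PP: "P * P = P" and adj: "mat_adjoint P = P"
    using P unfolding projector_def by auto
  have K: "kron P (1\<^sub>m dB) \<in> carrier_mat (dA * dB) (dA * dB)"
    using kron_carrier[of P "1\<^sub>m dB"] Pc by simp
  have "kron P (1\<^sub>m dB) * kron P (1\<^sub>m dB) = kron P (1\<^sub>m dB)"
    using kron_mult[OF Pc one_carrier_mat Pc one_carrier_mat] PP by simp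
  moreover have "mat_adjoint (kron P (1\<^sub>m dB)) = kron P (1\<^sub>m dB)"
  proof (rule eq_matI)
    fix i j assume "i < dim_row (kron P (1\<^sub>m dB))" and "j < dim_col (kron P (1\<^sub>m dB))"
    then have i: "i < dA * dB" and j: "j < dA * dB" using K by auto
    have "cnj (P $$ (j div dB, i div dB)) = P $$ (i div dB, j div dB)"
      using self_adjoint_index[OF adj Pc, of "j div dB" "i div dB"] pair_index_div_mod[OF i] pair_index_div_mod[OF j]
      by simp
    then show "mat_adjoint (kron P (1\<^sub>m dB)) $$ (i, j) = kron P (1\<^sub>m dB) $$ (i, j)"
      using K i j pair_index_div_mod[OF i] pair_index_div_mod[OF j]
      by (simp add: mat_adjoint_index kron_index[OF Pc one_carrier_mat])
  qed (use K in auto)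
  ultimately show ?thesis using K unfolding projector_def by simp
qed

lemma self_adjoint_sesquilinear:
  fixes B :: "complex mat"
  assumes B: "B \<in> carrier_mat n n" and adj: "mat_adjoint B = B"
    and v: "v \<in> carrier_vec n" and u: "u \<in> carrier_vec n"
  shows "conjugate v \<bullet> (B *\<^sub>v u) = conjugate (B *\<^sub>v v) \<bullet> u"
proof -
  have "conjugate v \<bullet> (B *\<^sub>v u) = (\<Sum>i<n. \<Sum>k<n. cnj (v $ i) * B $$ (i, k) * u $ k)"
    using B v u by (auto simp: scalar_prod_def lessThan_atLeast0 sum_distrib_left mult.assoc intro!: sum.cong)
  also have "\<dots> = (\<Sum>k<n. \<Sum>i<n. cnj (B $$ (k, i)) * cnj (v $ i) * u $ k)"
  proof (subst sum.swap, intro sum.cong refl)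
    fix k i assume "k \<in> {..<n}" and "i \<in> {..<n}"
    then have "B $$ (i, k) = cnj (B $$ (k, i))" using self_adjoint_index[OF adj B, of k i] by simp
    then show "cnj (v $ i) * B $$ (i, k) * u $ k = cnj (B $$ (k, i)) * cnj (v $ i) * u $ k" by simp
  qed
  also have "\<dots> = conjugate (B *\<^sub>v v) \<bullet> u"
    using B v u by (auto simp: scalar_prod_def lessThan_atLeast0 cnj_sum sum_distrib_right intro!: sum.cong)
  finally show ?thesis .
qed

lemma psd_congruence:
  fixes B M :: "complex mat"
  assumes M: "psd n M" and B: "B \<in> carrier_mat n n" and adj: "mat_adjoint B = B"
  shows "psd n (B * M * B)"
  unfolding psd_def
proof (intro conjI ballI)
  have Mc: "M \<in> carrier_mat n n" using M unfolding psd_def by simp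
  show "B * M * B \<in> carrier_mat n n" using Mc B by simp
  fix v :: "complex vec" assume v: "v \<in> carrier_vec n"
  define w where "w = B *\<^sub>v v"
  have w: "w \<in> carrier_vec n" using B v unfolding w_def by simp
  have "(B * M * B) *\<^sub>v v = B *\<^sub>v (M *\<^sub>v w)"
    using B Mc v unfolding w_def by (simp add: assoc_mult_mat_vec[of _ n n _ n])
  then have form: "conjugate v \<bullet> ((B * M * B) *\<^sub>v v) = conjugate w \<bullet> (M *\<^sub>v w)"
    using self_adjoint_sesquilinear[OF B adj v, of "M *\<^sub>v w"] Mc w unfolding w_def by simp
  show "conjugate v \<bullet> ((B * M * B) *\<^sub>v v) \<in> \<real>"
    and "0 \<le> Re (conjugate v \<bullet> ((B * M * B) *\<^sub>v v))"
    using M w unfolding form psd_def by auto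
qed

lemma psd_smult_nonneg:
  fixes M :: "complex mat"
  assumes M: "psd n M" and r: "0 \<le> r"
  shows "psd n (complex_of_real r \<cdot>\<^sub>m M)"
  unfolding psd_def
proof (intro conjI ballI)
  have Mc: "M \<in> carrier_mat n n" using M unfolding psd_def by simp
  show "complex_of_real r \<cdot>\<^sub>m M \<in> carrier_mat n n" using Mc by simp
  fix v :: "complex vec" assume v: "v \<in> carrier_vec n"
  have "(complex_of_real r \<cdot>\<^sub>m M) *\<^sub>v v = complex_of_real r \<cdot>\<^sub>v (M *\<^sub>v v)"
    using Mc v by (intro eq_vecI) (auto simp: scalar_prod_def sum_distrib_left mult.assoc)
  then have form: "conjugate v \<bullet> ((complex_of_real r \<cdot>\<^sub>m M) *\<^sub>v v) = complex_of_real r * (conjugate v \<bullet> (M *\<^sub>v v))"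
    using Mc v by simp
  show "conjugate v \<bullet> ((complex_of_real r \<cdot>\<^sub>m M) *\<^sub>v v) \<in> \<real>"
    and "0 \<le> Re (conjugate v \<bullet> ((complex_of_real r \<cdot>\<^sub>m M) *\<^sub>v v))"
    using M v r unfolding form psd_def by auto
qed

lemma psd_diag:
  fixes M :: "complex mat"
  assumes M: "psd n M" and i: "i < n"
  shows "M $$ (i, i) \<in> \<real> \<and> 0 \<le> Re (M $$ (i, i))"
proof -
  have Mc: "M \<in> carrier_mat n n" using M unfolding psd_def by simp
  have unit: "conjugate (unit_vec n i) = (unit_vec n i :: complex vec)"
    by (rule eq_vecI) (auto simp: unit_vec_def)
  have "conjugate (unit_vec n i) \<bullet> (M *\<^sub>v unit_vec n i) = M $$ (i, i)"
    unfolding unit using Mc i by (subst scalar_prod_left_unit) auto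
  then show ?thesis using M i unfolding psd_def by (metis unit_vec_carrier)
qed

lemma psd_trace:
  fixes M :: "complex mat"
  assumes M: "psd n M"
  shows "\<exists>q\<ge>0. mtrace M = complex_of_real q"
proof -
  have "dim_row M = n" using M unfolding psd_def by auto
  then have "mtrace M = (\<Sum>i<n. M $$ (i, i))" unfolding mtrace_def by simp
  moreover have "(\<Sum>i<n. M $$ (i, i)) \<in> \<real>" using psd_diag[OF M] by (intro sum_in_Reals) simp
  moreover have "0 \<le> Re (\<Sum>i<n. M $$ (i, i))" unfolding Re_sum using psd_diag[OF M] by (intro sum_nonneg) simp
  ultimately show ?thesis by (metis Re_complex_of_real Reals_cases)
qed

lemma mtrace_mult_comm:
  fixes A B :: "complex mat"
  assumes "A \<in> carrier_mat n n" and "B \<in> carrier_mat n n"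
  shows "mtrace (A * B) = mtrace (B * A)"
proof -
  have "mtrace (A * B) = (\<Sum>i<n. \<Sum>k<n. A $$ (i, k) * B $$ (k, i))"
    using assms unfolding mtrace_def by (auto simp: scalar_prod_def lessThan_atLeast0 intro!: sum.cong)
  also have "\<dots> = (\<Sum>k<n. \<Sum>i<n. B $$ (k, i) * A $$ (i, k))"
    by (subst sum.swap) (simp add: mult.commute)
  also have "\<dots> = mtrace (B * A)"
    using assms unfolding mtrace_def by (auto simp: scalar_prod_def lessThan_atLeast0 intro!: sum.cong)
  finally show ?thesis .
qed

lemma projector_probability_nonneg:
  assumes Q: "projector n Q" and \<rho>: "psd n \<rho>"
  shows "\<exists>q\<ge>0. mtrace (Q * \<rho>) = complex_of_real q"
proof -
  have Qc: "Q \<in> carrier_mat n n" and idem: "Q * Q = Q" and adj: "mat_adjoint Q = Q"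
    using Q unfolding projector_def by auto
  have \<rho>c: "\<rho> \<in> carrier_mat n n" using \<rho> unfolding psd_def by simp
  have "mtrace (Q * \<rho>) = mtrace (Q * (Q * \<rho>))"
    using Qc \<rho>c idem by (metis assoc_mult_mat)
  also have "\<dots> = mtrace (Q * \<rho> * Q)"
    using Qc \<rho>c by (intro mtrace_mult_comm[of _ n]) auto
  finally show ?thesis using psd_trace[OF psd_congruence[OF \<rho> Qc adj]] by simp
qed

subsection \<open>The Loewner-order step\<close>

lemma loewner_le_local_projection:
  fixes dA dB :: nat and \<rho> \<sigma> P :: "complex mat" and c :: complex and r :: real
  defines "Q \<equiv> kron P (1\<^sub>m dB)"
  assumes P: "projector dA P" and \<rho>: "\<rho> \<in> carrier_mat (dA * dB) (dA * dB)"
    and \<sigma>: "\<sigma> \<in> carrier_mat dB dB" and r: "0 \<le> r"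
    and le: "loewner_le (dA * dB) \<rho> (c \<cdot>\<^sub>m kron (ptrace_B dA dB \<rho>) \<sigma>)"
  shows "loewner_le (dA * dB) (complex_of_real r \<cdot>\<^sub>m (Q * \<rho> * Q))
           (c \<cdot>\<^sub>m kron (ptrace_B dA dB (complex_of_real r \<cdot>\<^sub>m (Q * \<rho> * Q))) \<sigma>)"
proof -
  define n where "n = dA * dB"
  define \<rho>A where "\<rho>A = ptrace_B dA dB \<rho>"
  define K where "K = kron \<rho>A \<sigma>"
  have Pc: "P \<in> carrier_mat dA dA" using P unfolding projector_def by simp
  have Q_projector: "projector n Q" unfolding Q_def n_def by (rule projector_kron_id[OF P])
  then have Qc: "Q \<in> carrier_mat n n" and adj: "mat_adjoint Q = Q" unfolding projector_def by auto
  have \<rho>c: "\<rho> \<in> carrier_mat n n" using \<rho> unfolding n_def .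
  have Kc: "K \<in> carrier_mat n n" using kron_carrier[of \<rho>A \<sigma>] \<sigma> unfolding K_def n_def \<rho>A_def by simp
  have gap: "psd n (c \<cdot>\<^sub>m K - \<rho>)" using le unfolding loewner_le_def K_def \<rho>A_def n_def by simp
  have sandwich_K: "Q * K * Q = kron (P * \<rho>A * P) \<sigma>"
    unfolding Q_def K_def \<rho>A_def
    using kron_mult[OF Pc one_carrier_mat ptrace_B_carrier \<sigma>]
      kron_mult[of "P * ptrace_B dA dB \<rho>" dA dA "1\<^sub>m dB * \<sigma>" dB dB P dA "1\<^sub>m dB" dB] Pc \<sigma>
    by simp
  have QK: "Q * K * Q \<in> carrier_mat n n" and Q\<rho>Q: "Q * \<rho> * Q \<in> carrier_mat n n"
    using Qc Kc \<rho>c by auto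
  have "ptrace_B dA dB (complex_of_real r \<cdot>\<^sub>m (Q * \<rho> * Q)) = complex_of_real r \<cdot>\<^sub>m ptrace_B dA dB (Q * \<rho> * Q)"
    using Q\<rho>Q unfolding n_def by (rule ptrace_B_smult)
  also have "ptrace_B dA dB (Q * \<rho> * Q) = P * \<rho>A * P"
    unfolding Q_def \<rho>A_def by (rule ptrace_B_local_sandwich[OF Pc \<rho>])
  finally have marginal: "ptrace_B dA dB (complex_of_real r \<cdot>\<^sub>m (Q * \<rho> * Q)) = complex_of_real r \<cdot>\<^sub>m (P * \<rho>A * P)" .
  have "Q * (c \<cdot>\<^sub>m K - \<rho>) = c \<cdot>\<^sub>m (Q * K) - Q * \<rho>"
    using mult_minus_distrib_mat[OF Qc smult_carrier_mat[OF Kc] \<rho>c] mult_smult_distrib[OF Qc Kc] by simp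
  also have "(c \<cdot>\<^sub>m (Q * K) - Q * \<rho>) * Q = c \<cdot>\<^sub>m (Q * K * Q) - Q * \<rho> * Q"
    using minus_mult_distrib_mat[of "c \<cdot>\<^sub>m (Q * K)" n n "Q * \<rho>" Q n] mult_smult_assoc_mat[of "Q * K" n n Q n]
      Qc Kc \<rho>c by simp
  finally have conj_gap: "Q * (c \<cdot>\<^sub>m K - \<rho>) * Q = c \<cdot>\<^sub>m (Q * K * Q) - Q * \<rho> * Q" .
  have "c \<cdot>\<^sub>m kron (ptrace_B dA dB (complex_of_real r \<cdot>\<^sub>m (Q * \<rho> * Q))) \<sigma> - complex_of_real r \<cdot>\<^sub>m (Q * \<rho> * Q)
      = c \<cdot>\<^sub>m (complex_of_real r \<cdot>\<^sub>m (Q * K * Q)) - complex_of_real r \<cdot>\<^sub>m (Q * \<rho> * Q)"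
    unfolding marginal kron_smult_left sandwich_K ..
  also have "\<dots> = complex_of_real r \<cdot>\<^sub>m (Q * (c \<cdot>\<^sub>m K - \<rho>) * Q)"
    unfolding conj_gap using QK Q\<rho>Q by (intro eq_matI) (auto simp: right_diff_distrib)
  finally have difference: "c \<cdot>\<^sub>m kron (ptrace_B dA dB (complex_of_real r \<cdot>\<^sub>m (Q * \<rho> * Q))) \<sigma>
      - complex_of_real r \<cdot>\<^sub>m (Q * \<rho> * Q) = complex_of_real r \<cdot>\<^sub>m (Q * (c \<cdot>\<^sub>m K - \<rho>) * Q)" .
  have "psd n (complex_of_real r \<cdot>\<^sub>m (Q * (c \<cdot>\<^sub>m K - \<rho>) * Q))"
    by (rule psd_smult_nonneg[OF psd_congruence[OF gap Qc adj] r])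
  moreover have "kron (ptrace_B dA dB (complex_of_real r \<cdot>\<^sub>m (Q * \<rho> * Q))) \<sigma> \<in> carrier_mat n n"
    using kron_carrier[of "ptrace_B dA dB (complex_of_real r \<cdot>\<^sub>m (Q * \<rho> * Q))" \<sigma>] \<sigma> unfolding n_def by simp
  ultimately show ?thesis
    using Q\<rho>Q unfolding loewner_le_def difference n_def by simp
qed

subsection \<open>Monotonicity of D_max and I_max\<close>

lemma Dmax_mono:
  assumes "\<And>l. loewner_le n \<rho> (complex_of_real (2 powr l) \<cdot>\<^sub>m \<tau>) \<Longrightarrow>
               loewner_le n \<rho>' (complex_of_real (2 powr l) \<cdot>\<^sub>m \<tau>')"
  shows "Dmax n \<rho>' \<tau>' \<le> Dmax n \<rho> \<tau>"
  unfolding Dmax_def by (rule Inf_superset_mono) (auto dest: assms)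

lemma Imax_mono:
  assumes "\<And>\<sigma>. normalized_state dB \<sigma> \<Longrightarrow>
             Dmax (dA * dB) \<rho>' (kron (ptrace_B dA dB \<rho>') \<sigma>) \<le> Dmax (dA * dB) \<rho> (kron (ptrace_B dA dB \<rho>) \<sigma>)"
  shows "Imax dA dB \<rho>' \<le> Imax dA dB \<rho>"
  unfolding Imax_def by (rule Inf_mono) (auto intro: assms)

lemma Imax_local_projection:
  fixes \<rho> P :: "complex mat" and r :: real
  assumes P: "projector dA P" and \<rho>: "\<rho> \<in> carrier_mat (dA * dB) (dA * dB)" and r: "0 \<le> r"
  shows "Imax dA dB (complex_of_real r \<cdot>\<^sub>m (kron P (1\<^sub>m dB) * \<rho> * kron P (1\<^sub>m dB))) \<le> Imax dA dB \<rho>"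
proof (rule Imax_mono, rule Dmax_mono)
  fix \<sigma> l assume "normalized_state dB \<sigma>"
  then have "\<sigma> \<in> carrier_mat dB dB" unfolding normalized_state_def psd_def by simp
  then show "loewner_le (dA * dB) \<rho> (complex_of_real (2 powr l) \<cdot>\<^sub>m kron (ptrace_B dA dB \<rho>) \<sigma>) \<Longrightarrow>
      loewner_le (dA * dB) (complex_of_real r \<cdot>\<^sub>m (kron P (1\<^sub>m dB) * \<rho> * kron P (1\<^sub>m dB)))
        (complex_of_real (2 powr l) \<cdot>\<^sub>m
         kron (ptrace_B dA dB (complex_of_real r \<cdot>\<^sub>m (kron P (1\<^sub>m dB) * \<rho> * kron P (1\<^sub>m dB)))) \<sigma>)"
    using loewner_le_local_projection[OF P \<rho> _ r] by blast
qed

theorem mainTheorem14: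
  fixes dA dB :: nat and \<rho> :: "complex mat" and I :: "'i set" and P :: "'i \<Rightarrow> complex mat"
  assumes "0 < dA" and "0 < dB"
    and "subnormalized_state (dA * dB) \<rho>"
    and "projective_measurement dA I P"
  shows "(SUP i \<in> {i \<in> I. mtrace (kron (P i) (1\<^sub>m dB) * \<rho>) \<noteq> 0}.
            Imax dA dB ((1 / mtrace (kron (P i) (1\<^sub>m dB) * \<rho>)) \<cdot>\<^sub>m
                        (kron (P i) (1\<^sub>m dB) * \<rho> * kron (P i) (1\<^sub>m dB))))
         \<le> Imax dA dB \<rho>"
proof (rule SUP_least)
  fix i assume "i \<in> {i \<in> I. mtrace (kron (P i) (1\<^sub>m dB) * \<rho>) \<noteq> 0}"
  then have P: "projector dA (P i)" using assms(4) unfolding projective_measurement_def by auto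
  have \<rho>: "psd (dA * dB) \<rho>" using assms(3) unfolding subnormalized_state_def by simp
  obtain q where q: "0 \<le> q" and prob: "mtrace (kron (P i) (1\<^sub>m dB) * \<rho>) = complex_of_real q"
    using projector_probability_nonneg[OF projector_kron_id[OF P] \<rho>] by blast
  have "\<rho> \<in> carrier_mat (dA * dB) (dA * dB)" using \<rho> unfolding psd_def by simp
  from Imax_local_projection[OF P this, of "1 / q"] q
  show "Imax dA dB ((1 / mtrace (kron (P i) (1\<^sub>m dB) * \<rho>)) \<cdot>\<^sub>m
                    (kron (P i) (1\<^sub>m dB) * \<rho> * kron (P i) (1\<^sub>m dB))) \<le> Imax dA dB \<rho>"
    unfolding prob by simp
qed

end
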